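(* Let $\Delta_1,\ldots,\Delta_m$ be bounded real intervals with $\Delta_j\cap\Delta_{j+1}=\emptyset$ ($j=1,\ldots,m-1$) and $\sigma_j\in\mathcal{M}(\Delta_j)$ with $\mathrm{Co}(\operatorname{supp}\sigma_j)=\Delta_j$. For each $j=2,\ldots,m$, \[ \widehat{s}_{1,j}(z)+\sum_{i=1}^{j-1}(-1)^{j-i}\,\widehat{s}_{1,i}(z)\,\widehat{s}_{j,i+1}(z)+(-1)^j\widehat{s}_{j,1}(z)\equiv0 \] for all $z\in\mathbb{C}\setminus(\Delta_1\cup\Delta_j)$; that is, $\widehat{s}_{1,j}-\widehat{s}_{1,j-1}\widehat{s}_{j,j}+\widehat{s}_{1,j-2}\widehat{s}_{j,j-1}+\cdots+(-1)^{j-1}\widehat{s}_{1,1}\widehat{s}_{j,2}+(-1)^j\widehat{s}_{j,1}\equiv0$.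
   Context: For a bounded interval $\Delta\subset\mathbb{R}$, $\mathcal{M}(\Delta)$ is the class of finite Borel measures of constant sign whose compact support consists of infinitely many points, is contained in $\mathbb{R}$, and has $\Delta$ as the smallest interval containing it. The Cauchy transform of a measure $s$ is $\widehat{s}(z)=\int\frac{ds(x)}{z-x}$. For $1\le j\le k\le m$: $s_{j,j}=\sigma_j$ and $s_{j,k}=\langle\sigma_j,\sigma_{j+1},\ldots,\sigma_k\rangle$ defined recursively by $ds_{j,k}(x)=\widehat{s}_{j+1,k}(x)\,d\sigma_j(x)$. For $1\le k<j\le m$: $s_{j,k}=\langle\sigma_j,\sigma_{j-1},\ldots,\sigma_k\rangle$ defined recursively by $ds_{j,k}(x)=\widehat{s}_{j-1,k}(x)\,d\sigma_j(x)$ (with $s_{k,k}=\sigma_k$). *)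

theory Defs
  imports "HOL-Analysis.Analysis"
begin

text \<open>A finite Borel measure of constant sign on the real line is represented as
  a sign e (either 1 or -1) times a positive finite Borel measure mu.\<close>

definition meas_support :: "real measure \<Rightarrow> real set" where
  "meas_support M = {x. \<forall>e>0. emeasure M (ball x e) > 0}"

definition in_class_M :: "real measure \<Rightarrow> real set \<Rightarrow> bool" where
  "in_class_M M D \<longleftrightarrow> sets M = sets borel \<and> finite_measure M \<and>
     compact (meas_support M) \<and> infinite (meas_support M) \<and>
     convex hull (meas_support M) = D"

definition cauchy_tr :: "real \<Rightarrow> real measure \<Rightarrow> (real \<Rightarrow> complex) \<Rightarrow> complex \<Rightarrow> complex" where
  "cauchy_tr e M f z = complex_of_real e * (LINT x|M. f x / (z - complex_of_real x))"

text \<open>nik_up e mu j n = Cauchy transform of s_{j,j+n} = <sigma_j,...,sigma_{j+n}>,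
  where sigma_i = e i * mu i.\<close>
fun nik_up :: "(nat \<Rightarrow> real) \<Rightarrow> (nat \<Rightarrow> real measure) \<Rightarrow> nat \<Rightarrow> nat \<Rightarrow> complex \<Rightarrow> complex" where
  "nik_up e mu j 0 z = cauchy_tr (e j) (mu j) (\<lambda>x. 1) z"
| "nik_up e mu j (Suc n) z =
     cauchy_tr (e j) (mu j) (\<lambda>x. nik_up e mu (Suc j) n (complex_of_real x)) z"

text \<open>nik_down e mu j n = Cauchy transform of s_{j,j-n} = <sigma_j,...,sigma_{j-n}> (n \<le> j - 1).\<close>
fun nik_down :: "(nat \<Rightarrow> real) \<Rightarrow> (nat \<Rightarrow> real measure) \<Rightarrow> nat \<Rightarrow> nat \<Rightarrow> complex \<Rightarrow> complex" where
  "nik_down e mu j 0 z = cauchy_tr (e j) (mu j) (\<lambda>x. 1) z"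
| "nik_down e mu j (Suc n) z =
     cauchy_tr (e j) (mu j) (\<lambda>x. nik_down e mu (j - 1) n (complex_of_real x)) z"

definition s_hat :: "(nat \<Rightarrow> real) \<Rightarrow> (nat \<Rightarrow> real measure) \<Rightarrow> nat \<Rightarrow> nat \<Rightarrow> complex \<Rightarrow> complex" where
  "s_hat e mu j k = (if j \<le> k then nik_up e mu j (k - j) else nik_down e mu j (j - k))"

end

(*
  Unfolding the recursion one level at a time and applying Fubini, a nested Cauchy transform
  along a chain of indices p 0, ..., p n is, up to the product of the signs e (p k), the integral
  against the product of the measures mu (p k) of the path kernel
  1 / (w - x_{p 0}) * prod_{k<n} 1 / (x_{p k} - x_{p (k+1)}).
  A descending transform s_{j,i} is the ascending one along the reversed chain j, j - 1, ..., i.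
  Since consecutive supports are disjoint compact sets, these kernels are bounded almost
  everywhere, and every term of the identity, including each product s_{1,i} s_{j,i+1}, becomes
  an integral over the product measure on the coordinates 1, ..., j. The identity thus reduces to
  one between kernels: multiplied by (z - x_1) (z - x_j) prod_{1<=k<j} (x_k - x_{k+1}) the
  alternating sum becomes (z - x_j) - sum_{1<=k<j} (x_k - x_{k+1}) - (z - x_1) = 0.
*)

theory Submission
  imports Defs
begin

section \<open>Path kernels\<close>

definition path_kernel :: "(nat \<Rightarrow> nat) \<Rightarrow> nat \<Rightarrow> 'a \<Rightarrow> (nat \<Rightarrow> 'a) \<Rightarrow> 'a::field" where
  "path_kernel p n w y = inverse (w - y (p 0)) * (\<Prod>k<n. inverse (y (p k) - y (p (Suc k))))"

lemma path_kernel_cong: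
  "(\<And>k. k \<le> n \<Longrightarrow> y (p k) = y' (p k)) \<Longrightarrow> path_kernel p n w y = path_kernel p n w y'"
  unfolding path_kernel_def by (intro arg_cong2[where f="(*)"] prod.cong) auto

lemma path_kernel_Suc:
  "path_kernel p (Suc n) w y = inverse (w - y (p 0)) * path_kernel (\<lambda>k. p (Suc k)) n (y (p 0)) y"
  unfolding path_kernel_def prod.lessThan_Suc_shift by simp

lemma path_kernel_ascending:
  "path_kernel (\<lambda>k. a + k) n w y = inverse (w - y a) * inverse (\<Prod>k\<in>{a..<a+n}. y k - y (Suc k))"
proof -
  have "(\<Prod>k<n. inverse (y (a + k) - y (a + Suc k))) = (\<Prod>k\<in>{a..<a+n}. inverse (y k - y (Suc k)))"
    by (rule prod.reindex_bij_witness[where i="\<lambda>k. k - a" and j="\<lambda>k. a + k"]) auto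
  then show ?thesis
    by (simp add: path_kernel_def prod_inversef[unfolded comp_def])
qed

lemma path_kernel_descending:
  assumes "n \<le> j"
  shows "path_kernel (\<lambda>k. j - k) n w y = (-1) ^ n * inverse (w - y j) * inverse (\<Prod>k\<in>{j-n..<j}. y k - y (Suc k))"
proof -
  have "(\<Prod>k<n. inverse (y (j - k) - y (j - Suc k))) = (\<Prod>k\<in>{j-n..<j}. - inverse (y k - y (Suc k)))"
    using assms
    by (intro prod.reindex_bij_witness[where i="\<lambda>k. j - Suc k" and j="\<lambda>k. j - Suc k"])
       (auto simp: Suc_diff_Suc inverse_minus_eq[symmetric])
  also have "\<dots> = (-1) ^ n * inverse (\<Prod>k\<in>{j-n..<j}. y k - y (Suc k))"
    using assms by (simp add: prod_uminus prod_inversef[unfolded comp_def])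
  finally show ?thesis
    by (simp add: path_kernel_def)
qed

lemma neg_one_power_diff_one: "0 < n \<Longrightarrow> (-1::'a::ring_1) ^ n * (-1) ^ (n - 1) = -1"
  by (cases n) (simp_all flip: power_add)

lemma path_kernel_alternating_sum:
  fixes y :: "nat \<Rightarrow> 'a::field"
  assumes j: "1 \<le> j" and distinct: "\<And>k. 1 \<le> k \<Longrightarrow> k < j \<Longrightarrow> y k \<noteq> y (Suc k)"
    and w: "w \<noteq> y 1" "w \<noteq> y j"
  shows "path_kernel Suc (j - 1) w y
    + (\<Sum>i=1..j-1. (-1) ^ (j - i) * path_kernel Suc (i - 1) w y * path_kernel (\<lambda>k. j - k) (j - Suc i) w y)
    + (-1) ^ j * path_kernel (\<lambda>k. j - k) (j - 1) w y = 0"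
    (is "?first + ?middle + ?last = 0")
proof -
  define d where "d k = y k - y (Suc k)" for k
  define P where "P a b = (\<Prod>k\<in>{a..<b}. d k)" for a b
  define A where "A = w - y 1"
  define B where "B = w - y j"
  define c where "c = inverse (A * B * P 1 j)"
  have P_nonzero: "P a b \<noteq> 0" if "1 \<le> a" "b \<le> j" for a b
    using distinct that by (auto simp: P_def d_def)
  have A: "A \<noteq> 0" and B: "B \<noteq> 0"
    using w by (auto simp: A_def B_def)
  have up: "path_kernel Suc (i - 1) w y = inverse A * inverse (P 1 i)" if "1 \<le> i" for i
    unfolding path_kernel_ascending[of 1, unfolded plus_1_eq_Suc] using that by (simp add: P_def d_def A_def)
  have down: "path_kernel (\<lambda>k. j - k) (j - i) w y = (-1) ^ (j - i) * inverse B * inverse (P i j)"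
    if "i \<le> j" for i
    unfolding path_kernel_descending[OF diff_le_self] using that by (simp add: P_def d_def B_def)
  have "?first = B * c"
    using up[OF j] A B P_nonzero[of 1 j] by (simp add: c_def field_simps)
  moreover have "?last = - A * c"
    using down[of 1] j A B P_nonzero[of 1 j] neg_one_power_diff_one[of j, where 'a='a]
    by (simp add: c_def field_simps)
  moreover have "?middle = (\<Sum>i=1..<j. - d i * c)"
  proof (rule sum.cong)
    fix i assume i: "i \<in> {1..<j}"
    then have i_bounds: "1 \<le> i" "Suc i \<le> j"
      by auto
    have "P 1 j = P 1 i * P i j"
      using i unfolding P_def by (simp add: prod.atLeastLessThan_concat)
    moreover have "P i j = d i * P (Suc i) j"
      using i unfolding P_def by (simp add: prod.atLeast_Suc_lessThan)
    ultimately have split: "P 1 j = P 1 i * d i * P (Suc i) j"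
      by simp
    show "(-1) ^ (j - i) * path_kernel Suc (i - 1) w y * path_kernel (\<lambda>k. j - k) (j - Suc i) w y
        = - d i * c"
      unfolding up[OF i_bounds(1)] down[OF i_bounds(2)] c_def split
      using i A B P_nonzero[of 1 i] P_nonzero[of "Suc i" j] distinct[of i] neg_one_power_diff_one[of "j - i", where 'a='a]
      by (simp add: d_def field_simps)
  qed (use j in auto)
  moreover have "(\<Sum>i=1..<j. - d i * c) = (A - B) * c"
    using sum_Suc_diff'[OF j, of y]
    by (simp add: d_def A_def B_def sum_negf sum_subtractf flip: sum_distrib_right)
  ultimately show ?thesis
    by (simp add: algebra_simps)
qed

section \<open>Finite products of finite measures\<close>

text \<open>The product-measure library requires every factor to be sigma-finite; outside the index set
  at hand we substitute null measures, which does not change the product over that set.\<close>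

lemma finite_measures_extend_to_product:
  assumes "\<And>i. i \<in> I \<Longrightarrow> finite_measure (M i)"
  obtains M' where "product_sigma_finite M'" and "\<And>i. i \<in> I \<Longrightarrow> M' i = M i"
proof
  let ?M' = "\<lambda>i. if i \<in> I then M i else null_measure (M i)"
  have "finite_measure (?M' i)" for i
    using assms by (cases "i \<in> I") (auto intro: finite_measureI)
  then show "product_sigma_finite ?M'"
    unfolding product_sigma_finite_def using finite_measure.axioms(1) by blast
qed simp

lemma finite_measure_PiM:
  assumes "finite I" and "\<And>i. i \<in> I \<Longrightarrow> finite_measure (M i)"
  shows "finite_measure (PiM I M)"
proof -
  obtain M' where "product_sigma_finite M'" and M': "\<And>i. i \<in> I \<Longrightarrow> M' i = M i"
    using finite_measures_extend_to_product assms(2) by blast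
  interpret product_sigma_finite M' by fact
  have "emeasure (PiM I M') (space (PiM I M')) = (\<Prod>i\<in>I. emeasure (M' i) (space (M' i)))"
    using assms(1) by (simp add: space_PiM emeasure_PiM)
  also have "\<dots> \<noteq> \<infinity>"
    using assms(2) by (simp add: M' ennreal_prod_eq_top finite_measure.emeasure_finite)
  finally have "finite_measure (PiM I M')"
    by (rule finite_measureI)
  then show ?thesis
    using M' by (simp cong: PiM_cong)
qed

lemma AE_PiM_component_finite:
  assumes "finite I" and finite: "\<And>i. i \<in> I \<Longrightarrow> finite_measure (M i)"
    and "i \<in> I" and "AE x in M i. P x"
  shows "AE x in PiM I M. P (x i)"
proof -
  obtain M' where "product_sigma_finite M'" and M': "\<And>i. i \<in> I \<Longrightarrow> M' i = M i"
    using finite_measures_extend_to_product finite by blast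
  interpret product_sigma_finite M' by fact
  obtain N where N: "N \<in> null_sets (M i)" "{x \<in> space (M i). \<not> P x} \<subseteq> N"
    using \<open>AE x in M i. P x\<close> unfolding eventually_ae_filter by blast
  define S where "S = (\<Pi>\<^sub>E k\<in>I. if k = i then N else space (M' k))"
  have "S \<in> sets (PiM I M')"
    using N \<open>i \<in> I\<close> M' unfolding S_def by (intro sets_PiM_I_finite) (auto simp: \<open>finite I\<close>)
  moreover have "emeasure (PiM I M') S = 0"
    using N \<open>i \<in> I\<close> M' \<open>finite I\<close> unfolding S_def
    by (subst emeasure_PiM) (auto simp: prod_zero_iff)
  ultimately have "S \<in> null_sets (PiM I M)"
    using M' by (simp add: null_sets_def cong: PiM_cong)
  moreover have "{x \<in> space (PiM I M). \<not> P (x i)} \<subseteq> S"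
    using N \<open>i \<in> I\<close> M' by (force simp: S_def space_PiM PiE_iff)
  ultimately show ?thesis
    by (rule AE_I')
qed

lemma integral_PiM_singleton:
  fixes f :: "'a \<Rightarrow> 'b::{banach, second_countable_topology}"
  assumes "finite_measure (M i)" and "f \<in> borel_measurable (M i)"
  shows "(\<integral>x. f (x i) \<partial>PiM {i} M) = integral\<^sup>L (M i) f"
proof -
  obtain M' where "product_sigma_finite M'" and M': "\<And>k. k \<in> {i} \<Longrightarrow> M' k = M k"
    by (rule finite_measures_extend_to_product[of "{i}"]) (use assms(1) in auto)
  interpret product_sigma_finite M' by fact
  have "PiM {i} M' = PiM {i} M"
    using M' by (auto intro: PiM_cong)
  then show ?thesis
    using product_integral_singleton[of f i] assms(2) M' by simp
qed

lemma
  fixes f :: "('i \<Rightarrow> 'a) \<Rightarrow> 'b::{banach, second_countable_topology}"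
  assumes "finite J" "i \<notin> J" and finite: "\<And>k. k \<in> insert i J \<Longrightarrow> finite_measure (M k)"
    and f: "integrable (PiM (insert i J) M) f"
  shows borel_measurable_integral_PiM_update:
      "(\<lambda>t. \<integral>y. f (y(i := t)) \<partial>PiM J M) \<in> borel_measurable (M i)"
    and integral_PiM_insert:
      "integral\<^sup>L (PiM (insert i J) M) f = (\<integral>t. (\<integral>y. f (y(i := t)) \<partial>PiM J M) \<partial>M i)"
proof -
  obtain M' where "product_sigma_finite M'" and M': "\<And>k. k \<in> insert i J \<Longrightarrow> M' k = M k"
    using finite_measures_extend_to_product finite by blast
  interpret product_sigma_finite M' by fact
  interpret J: sigma_finite_measure "PiM J M'"
    using sigma_finite \<open>finite J\<close> .
  have PiM_J: "PiM J M' = PiM J M" and PiM_iJ: "PiM (insert i J) M' = PiM (insert i J) M"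
    using M' by (auto intro: PiM_cong)
  have f_meas[measurable]: "f \<in> borel_measurable (PiM (insert i J) M')"
    using f PiM_iJ by simp
  have h_meas: "(\<lambda>t. \<integral>y. f (y(i := t)) \<partial>PiM J M') \<in> borel_measurable (M' i)"
  proof (rule J.borel_measurable_lebesgue_integral)
    have "(\<lambda>(t, y). (y, t)) \<in> measurable (M' i \<Otimes>\<^sub>M PiM J M') (PiM J M' \<Otimes>\<^sub>M M' i)"
      by measurable
    from measurable_comp[OF measurable_comp[OF this measurable_add_dim] f_meas]
    show "(\<lambda>(t, y). f (y(i := t))) \<in> borel_measurable (M' i \<Otimes>\<^sub>M PiM J M')"
      by (simp add: comp_def case_prod_beta')
  qed
  then show "(\<lambda>t. \<integral>y. f (y(i := t)) \<partial>PiM J M) \<in> borel_measurable (M i)"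
    using M' PiM_J by simp
  have "integral\<^sup>L (PiM (insert i J) M') f = integral\<^sup>L (PiM ({i} \<union> J) M') f"
    by simp
  also have "\<dots> = (\<integral>x. (\<integral>y. f (merge {i} J (x, y)) \<partial>PiM J M') \<partial>PiM {i} M')"
    using f \<open>finite J\<close> \<open>i \<notin> J\<close> PiM_iJ by (intro product_integral_fold) auto
  also have "\<dots> = (\<integral>x. (\<integral>y. f (y(i := x i)) \<partial>PiM J M') \<partial>PiM {i} M')"
  proof (intro Bochner_Integration.integral_cong refl)
    fix x y assume "y \<in> space (PiM J M')"
    then have "merge {i} J (x, y) = y(i := x i)"
      using \<open>i \<notin> J\<close> by (auto simp: merge_def space_PiM PiE_def extensional_def)
    then show "f (merge {i} J (x, y)) = f (y(i := x i))"
      by simp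
  qed
  also have "\<dots> = (\<integral>t. (\<integral>y. f (y(i := t)) \<partial>PiM J M') \<partial>M' i)"
    using h_meas by (rule product_integral_singleton)
  finally show "integral\<^sup>L (PiM (insert i J) M) f = (\<integral>t. (\<integral>y. f (y(i := t)) \<partial>PiM J M) \<partial>M i)"
    using M' PiM_J PiM_iJ by simp
qed

lemma integral_PiM_mult:
  fixes f g :: "('i \<Rightarrow> 'a) \<Rightarrow> 'b::{real_normed_field, banach, second_countable_topology}"
  assumes "I \<inter> J = {}" and "finite I" and "finite J"
    and finite: "\<And>i. i \<in> I \<union> J \<Longrightarrow> finite_measure (M i)"
    and integrable: "integrable (PiM (I \<union> J) M) (\<lambda>x. f x * g x)"
    and f: "\<And>x y. (\<And>i. i \<in> I \<Longrightarrow> x i = y i) \<Longrightarrow> f x = f y"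
    and g: "\<And>x y. (\<And>i. i \<in> J \<Longrightarrow> x i = y i) \<Longrightarrow> g x = g y"
  shows "(\<integral>x. f x * g x \<partial>PiM (I \<union> J) M) = integral\<^sup>L (PiM I M) f * integral\<^sup>L (PiM J M) g"
proof -
  obtain M' where "product_sigma_finite M'" and M': "\<And>i. i \<in> I \<union> J \<Longrightarrow> M' i = M i"
    using finite_measures_extend_to_product finite by blast
  interpret product_sigma_finite M' by fact
  have PiM_eq: "PiM I M' = PiM I M" "PiM J M' = PiM J M" "PiM (I \<union> J) M' = PiM (I \<union> J) M"
    using M' by (auto intro: PiM_cong)
  have merge: "f (merge I J (x, y)) = f x" "g (merge I J (x, y)) = g y" for x y
    by (rule f, simp add: merge_def) (rule g, use \<open>I \<inter> J = {}\<close> in \<open>auto simp: merge_def\<close>)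
  have "(\<integral>x. f x * g x \<partial>PiM (I \<union> J) M') = (\<integral>x. (\<integral>y. f x * g y \<partial>PiM J M') \<partial>PiM I M')"
    using product_integral_fold[OF assms(1-3), of "\<lambda>x. f x * g x"] integrable PiM_eq
    by (simp add: merge)
  then show ?thesis
    by (simp add: PiM_eq)
qed

section \<open>Nikishin chains\<close>

lemma inverse_diff_bounded:
  fixes A B :: "'a::{real_normed_field, heine_borel} set"
  assumes "compact A" "closed B" "A \<inter> B = {}"
  obtains C where "\<And>a b. a \<in> A \<Longrightarrow> b \<in> B \<Longrightarrow> norm (inverse (a - b)) \<le> C"
proof -
  obtain \<delta> where "\<delta> > 0" and \<delta>: "\<And>a b. a \<in> A \<Longrightarrow> b \<in> B \<Longrightarrow> \<delta> \<le> dist a b"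
    using separate_compact_closed[OF assms] by blast
  have "norm (inverse (a - b)) \<le> inverse \<delta>" if "a \<in> A" "b \<in> B" for a b
    using \<delta>[OF that] \<open>\<delta> > 0\<close> by (simp add: norm_inverse dist_norm le_imp_inverse_le)
  then show ?thesis
    using that by blast
qed

definition concentrated_on_compact :: "real measure \<Rightarrow> real set \<Rightarrow> bool" where
  "concentrated_on_compact M K \<longleftrightarrow>
     sets M = sets borel \<and> finite_measure M \<and> compact K \<and> (AE x in M. x \<in> K)"

lemma AE_meas_support:
  assumes "sets M = sets borel"
  shows "AE x in M. x \<in> meas_support M"
proof -
  define F where "F = {ball x e | x e. emeasure M (ball x e) = 0}"
  obtain F' where "F' \<subseteq> F" and "countable F'" and F': "\<Union>F' = \<Union>F"
    using Lindelof[of F] by (auto simp: F_def)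
  have "(\<Union>B\<in>F'. B) \<in> null_sets M"
    using \<open>countable F'\<close>
  proof (rule null_sets_UN')
    fix B assume "B \<in> F'"
    then show "B \<in> null_sets M"
      using \<open>F' \<subseteq> F\<close> assms by (auto simp: F_def null_sets_def)
  qed
  moreover have "{x \<in> space M. x \<notin> meas_support M} \<subseteq> (\<Union>B\<in>F'. B)"
  proof
    fix x assume "x \<in> {x \<in> space M. x \<notin> meas_support M}"
    then obtain e where "e > 0" and "emeasure M (ball x e) = 0"
      by (auto simp: meas_support_def not_less)
    then have "ball x e \<in> F" and "x \<in> ball x e"
      by (auto simp: F_def)
    then have "x \<in> \<Union>F"
      by blast
    then show "x \<in> (\<Union>B\<in>F'. B)"
      using F' by simp
  qed
  ultimately show ?thesis
    by (rule AE_I')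
qed

lemma in_class_M_imp_concentrated_on_compact:
  assumes "in_class_M M D"
  shows "concentrated_on_compact M D"
proof -
  have "meas_support M \<subseteq> D"
    using assms hull_subset[of "meas_support M" convex] by (simp add: in_class_M_def)
  moreover have "AE x in M. x \<in> meas_support M"
    using assms by (intro AE_meas_support) (simp add: in_class_M_def)
  ultimately have "AE x in M. x \<in> D"
    by (auto elim: eventually_mono)
  moreover have "compact D"
    using assms compact_convex_hull[of "meas_support M"] by (simp add: in_class_M_def)
  ultimately show ?thesis
    using assms by (simp add: in_class_M_def concentrated_on_compact_def)
qed

definition nikishin_chain :: "(nat \<Rightarrow> real measure) \<Rightarrow> (nat \<Rightarrow> real set) \<Rightarrow> (nat \<Rightarrow> nat) \<Rightarrow> nat \<Rightarrow> bool" where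
  "nikishin_chain mu K p n \<longleftrightarrow> inj_on p {..n} \<and>
     (\<forall>k\<le>n. concentrated_on_compact (mu (p k)) (K (p k))) \<and>
     (\<forall>k<n. K (p k) \<inter> K (p (Suc k)) = {})"

lemma nikishin_chain_tail:
  "nikishin_chain mu K p (Suc n) \<Longrightarrow> nikishin_chain mu K (\<lambda>k. p (Suc k)) n"
  unfolding nikishin_chain_def inj_on_def by auto

lemma nikishin_chain_prefix:
  "nikishin_chain mu K p n \<Longrightarrow> l \<le> n \<Longrightarrow> nikishin_chain mu K p l"
  unfolding nikishin_chain_def by (auto intro: inj_on_subset)

lemma nikishin_chain_reverse:
  assumes "nikishin_chain mu K (\<lambda>k. a + k) n"
  shows "nikishin_chain mu K (\<lambda>k. a + n - k) n"
  unfolding nikishin_chain_def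
proof (intro conjI allI impI)
  show "inj_on (\<lambda>k. a + n - k) {..n}"
    by (auto simp: inj_on_def)
  fix k
  show "concentrated_on_compact (mu (a + n - k)) (K (a + n - k))" if "k \<le> n"
    using assms that unfolding nikishin_chain_def
    by (metis Nat.add_diff_assoc diff_le_self)
  show "K (a + n - k) \<inter> K (a + n - Suc k) = {}" if "k < n"
  proof -
    have disjoint: "K (a + l) \<inter> K (a + Suc l) = {}" if "l < n" for l
      using assms that unfolding nikishin_chain_def by simp
    have "K (a + (n - Suc k)) \<inter> K (a + Suc (n - Suc k)) = {}"
      by (rule disjoint) (use that in simp)
    moreover have "a + Suc (n - Suc k) = a + n - k" and "a + (n - Suc k) = a + n - Suc k"
      using that by simp_all
    ultimately show ?thesis
      by (simp add: Int_commute)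
  qed
qed

lemma nikishin_chain_ascending_iff:
  assumes "1 \<le> j"
  shows "nikishin_chain mu K Suc (j - 1) \<longleftrightarrow>
    (\<forall>k\<in>{1..j}. concentrated_on_compact (mu k) (K k)) \<and> (\<forall>k\<in>{1..<j}. K k \<inter> K (Suc k) = {})"
proof -
  have shift: "(\<forall>l. l < b \<longrightarrow> P (Suc l)) \<longleftrightarrow> (\<forall>k\<in>{1..<Suc b}. P k)" for b and P :: "nat \<Rightarrow> bool"
  proof (intro iffI ballI)
    fix k assume "\<forall>l. l < b \<longrightarrow> P (Suc l)" and "k \<in> {1..<Suc b}"
    then show "P k"
      by (cases k) auto
  qed auto
  have "{1..<Suc j} = {1..j}" and "Suc (j - 1) = j" and "\<And>k. k \<le> j - 1 \<longleftrightarrow> k < j"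
    using assms by auto
  then show ?thesis
    unfolding nikishin_chain_def
    using shift[of "Suc (j - 1)" "\<lambda>k. concentrated_on_compact (mu k) (K k)"]
      shift[of "j - 1" "\<lambda>k. K k \<inter> K (Suc k) = {}"]
    by (simp add: inj_on_def less_Suc_eq_le)
qed

lemma nikishin_chain_descending:
  assumes "nikishin_chain mu K Suc (j - 1)" and "1 \<le> i" and "i \<le> j"
  shows "nikishin_chain mu K (\<lambda>k. j - k) (j - i)"
proof -
  have "nikishin_chain mu K (\<lambda>k. 1 + (j - 1) - k) (j - 1)"
    using nikishin_chain_reverse[of mu K 1 "j - 1"] assms(1) by (simp add: plus_1_eq_Suc)
  moreover have "(\<lambda>k. 1 + (j - 1) - k) = (\<lambda>k. j - k)"
    using assms(2,3) by auto
  ultimately show ?thesis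
    using assms(2) by (auto intro: nikishin_chain_prefix)
qed

lemma borel_measurable_path_kernel:
  assumes "p ` {..n} \<subseteq> I" and "\<And>k. k \<le> n \<Longrightarrow> sets (M (p k)) = sets borel"
  shows "(\<lambda>x. path_kernel p n w (\<lambda>k. complex_of_real (x k))) \<in> borel_measurable (PiM I M)"
proof -
  have coordinate: "(\<lambda>x. x (p k)) \<in> borel_measurable (PiM I M)" if "k \<le> n" for k
  proof -
    have "(\<lambda>x. x (p k)) \<in> measurable (PiM I M) (M (p k))"
      using assms(1) that by (intro measurable_component_singleton) auto
    then show ?thesis
      using measurable_cong_sets[OF refl assms(2)[OF that], of "PiM I M"] by blast
  qed
  have [measurable]: "(\<lambda>x. \<Prod>k<n. inverse (complex_of_real (x (p k)) - complex_of_real (x (p (Suc k)))))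
      \<in> borel_measurable (PiM I M)"
  proof (rule borel_measurable_prod)
    fix k assume "k \<in> {..<n}"
    then have [measurable]: "(\<lambda>x. x (p k)) \<in> borel_measurable (PiM I M)" "(\<lambda>x. x (p (Suc k))) \<in> borel_measurable (PiM I M)"
      by (auto intro: coordinate)
    show "(\<lambda>x. inverse (complex_of_real (x (p k)) - complex_of_real (x (p (Suc k))))) \<in> borel_measurable (PiM I M)"
      by measurable
  qed
  have [measurable]: "(\<lambda>x. x (p 0)) \<in> borel_measurable (PiM I M)"
    by (auto intro: coordinate)
  show ?thesis
    unfolding path_kernel_def by measurable
qed

lemma nikishin_chain_separated:
  assumes "nikishin_chain mu K p n"
  obtains C where "\<And>k a b. k < n \<Longrightarrow> a \<in> K (p k) \<Longrightarrow> b \<in> K (p (Suc k)) \<Longrightarrow>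
    norm (inverse (complex_of_real a - complex_of_real b)) \<le> C k"
proof -
  have "\<forall>k\<in>{..<n}. \<exists>C. \<forall>a\<in>K (p k). \<forall>b\<in>K (p (Suc k)). norm (inverse (a - b)) \<le> C"
  proof
    fix k assume "k \<in> {..<n}"
    then have "compact (K (p k))" and "closed (K (p (Suc k)))" and "K (p k) \<inter> K (p (Suc k)) = {}"
      using assms unfolding nikishin_chain_def concentrated_on_compact_def by (auto intro: compact_imp_closed)
    then obtain C where "\<And>a b. a \<in> K (p k) \<Longrightarrow> b \<in> K (p (Suc k)) \<Longrightarrow> norm (inverse (a - b)) \<le> C"
      by (rule inverse_diff_bounded) auto
    then show "\<exists>C. \<forall>a\<in>K (p k). \<forall>b\<in>K (p (Suc k)). norm (inverse (a - b)) \<le> C"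
      by blast
  qed
  then obtain C where "\<forall>k\<in>{..<n}. \<forall>a\<in>K (p k). \<forall>b\<in>K (p (Suc k)). norm (inverse (a - b)) \<le> C k"
    by (auto dest: bchoice)
  then show ?thesis
    by (intro that[of C]) (simp add: norm_inverse flip: of_real_diff)
qed

lemma path_kernel_AE_bounded:
  assumes chain: "nikishin_chain mu K p n" and "finite I" and "p ` {..n} \<subseteq> I"
    and "\<And>i. i \<in> I \<Longrightarrow> finite_measure (mu i)" and w: "w \<notin> complex_of_real ` K (p 0)"
  obtains C where "AE x in PiM I mu. norm (path_kernel p n w (\<lambda>k. complex_of_real (x k))) \<le> C"
proof -
  have "compact (complex_of_real ` K (p 0))"
    using chain unfolding nikishin_chain_def concentrated_on_compact_def
    by (auto intro: compact_continuous_image continuous_intros)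
  obtain C0 where C0: "\<And>a b. a \<in> {w} \<Longrightarrow> b \<in> complex_of_real ` K (p 0) \<Longrightarrow> norm (inverse (a - b)) \<le> C0"
    by (rule inverse_diff_bounded[of "{w}" "complex_of_real ` K (p 0)"])
      (use \<open>compact (complex_of_real ` K (p 0))\<close> w in \<open>auto intro: compact_imp_closed\<close>)
  obtain C where C: "\<And>k a b. k < n \<Longrightarrow> a \<in> K (p k) \<Longrightarrow> b \<in> K (p (Suc k)) \<Longrightarrow>
      norm (inverse (complex_of_real a - complex_of_real b)) \<le> C k"
    using nikishin_chain_separated[OF chain] by blast
  have bound: "norm (path_kernel p n w (\<lambda>k. complex_of_real (x k))) \<le> C0 * (\<Prod>k<n. C k)"
    if "\<forall>k\<in>{..n}. x (p k) \<in> K (p k)" for x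
    unfolding path_kernel_def norm_mult prod_norm[symmetric]
    using that C0[of w "complex_of_real (x (p 0))"] C
    by (intro mult_mono prod_mono) (auto intro: order.trans[OF norm_ge_zero] prod_nonneg)
  have "AE x in PiM I mu. \<forall>k\<in>{..n}. x (p k) \<in> K (p k)"
  proof (rule eventually_ball_finite[OF finite_atMost], rule ballI)
    fix k assume "k \<in> {..n}"
    then show "AE x in PiM I mu. x (p k) \<in> K (p k)"
      using assms(1-4) by (intro AE_PiM_component_finite) (auto simp: nikishin_chain_def concentrated_on_compact_def)
  qed
  then show ?thesis
    using bound by (intro that) (rule eventually_mono)
qed

lemma integrable_path_kernel:
  assumes "nikishin_chain mu K p n" and "finite I" and "p ` {..n} \<subseteq> I"
    and "\<And>i. i \<in> I \<Longrightarrow> finite_measure (mu i)" and "w \<notin> complex_of_real ` K (p 0)"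
  shows "integrable (PiM I mu) (\<lambda>x. path_kernel p n w (\<lambda>k. complex_of_real (x k)))"
proof -
  interpret finite_measure "PiM I mu"
    using finite_measure_PiM assms(2,4) .
  obtain C where "AE x in PiM I mu. norm (path_kernel p n w (\<lambda>k. complex_of_real (x k))) \<le> C"
    using path_kernel_AE_bounded assms by blast
  then show ?thesis
  proof (rule integrable_const_bound)
    show "(\<lambda>x. path_kernel p n w (\<lambda>k. complex_of_real (x k))) \<in> borel_measurable (PiM I mu)"
      using assms(1,3) by (intro borel_measurable_path_kernel) (auto simp: nikishin_chain_def concentrated_on_compact_def)
  qed
qed

lemma integrable_path_kernel_mult:
  assumes "nikishin_chain mu K p n" and "nikishin_chain mu K q l"
    and "finite I" and "p ` {..n} \<subseteq> I" and "q ` {..l} \<subseteq> I" and "\<And>i. i \<in> I \<Longrightarrow> finite_measure (mu i)"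
    and "w \<notin> complex_of_real ` K (p 0)" and "w \<notin> complex_of_real ` K (q 0)"
  shows "integrable (PiM I mu)
    (\<lambda>x. path_kernel p n w (\<lambda>k. complex_of_real (x k)) * path_kernel q l w (\<lambda>k. complex_of_real (x k)))"
proof -
  interpret finite_measure "PiM I mu"
    using finite_measure_PiM assms(3,6) .
  obtain C where C: "AE x in PiM I mu. norm (path_kernel p n w (\<lambda>k. complex_of_real (x k))) \<le> C"
    using path_kernel_AE_bounded assms(1,3,4,6,7) by blast
  obtain C' where C': "AE x in PiM I mu. norm (path_kernel q l w (\<lambda>k. complex_of_real (x k))) \<le> C'"
    using path_kernel_AE_bounded assms(2,3,5,6,8) by blast
  have "AE x in PiM I mu. norm (path_kernel p n w (\<lambda>k. complex_of_real (x k)) * path_kernel q l w (\<lambda>k. complex_of_real (x k))) \<le> C * C'"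
    using C C' by eventually_elim (auto simp: norm_mult intro!: mult_mono order.trans[OF norm_ge_zero])
  then show ?thesis
  proof (rule integrable_const_bound)
    have "sets (mu (p k)) = sets borel" if "k \<le> n" for k
      using assms(1) that by (simp add: nikishin_chain_def concentrated_on_compact_def)
    moreover have "sets (mu (q k)) = sets borel" if "k \<le> l" for k
      using assms(2) that by (simp add: nikishin_chain_def concentrated_on_compact_def)
    ultimately show "(\<lambda>x. path_kernel p n w (\<lambda>k. complex_of_real (x k)) * path_kernel q l w (\<lambda>k. complex_of_real (x k)))
        \<in> borel_measurable (PiM I mu)"
      using assms(4,5) by (intro borel_measurable_times borel_measurable_path_kernel)
  qed
qed

section \<open>Nested Cauchy transforms as integrals over product measures\<close>

lemma nik_up_shift: "nik_up e mu (a + b) n z = nik_up (\<lambda>k. e (a + k)) (\<lambda>k. mu (a + k)) b n z"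
proof (induction n arbitrary: b z)
  case (Suc n)
  have "nik_up e mu (Suc (a + b)) n x = nik_up (\<lambda>k. e (a + k)) (\<lambda>k. mu (a + k)) (Suc b) n x" for x
    using Suc.IH[of "Suc b"] by simp
  then show ?case
    by (simp only: nik_up.simps)
qed (simp only: nik_up.simps)

lemma nik_down_eq_nik_up: "nik_down e mu (j - a) n z = nik_up (\<lambda>k. e (j - k)) (\<lambda>k. mu (j - k)) a n z"
proof (induction n arbitrary: a z)
  case (Suc n)
  have "nik_down e mu (j - a - 1) n x = nik_up (\<lambda>k. e (j - k)) (\<lambda>k. mu (j - k)) (Suc a) n x" for x
    using Suc.IH[of "Suc a"] by simp
  then show ?case
    by (simp only: nik_down.simps nik_up.simps)
qed (simp only: nik_down.simps nik_up.simps)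

lemma s_hat_ascending: "1 \<le> i \<Longrightarrow> s_hat e mu 1 i z = nik_up (\<lambda>k. e (Suc k)) (\<lambda>k. mu (Suc k)) 0 (i - 1) z"
  using nik_up_shift[of e mu 1 0 "i - 1" z] by (simp add: s_hat_def)

lemma s_hat_descending:
  assumes "i \<le> j"
  shows "s_hat e mu j i z = nik_up (\<lambda>k. e (j - k)) (\<lambda>k. mu (j - k)) 0 (j - i) z"
proof (cases "i = j")
  case True
  then show ?thesis
    by (simp only: s_hat_def nik_up.simps order.refl if_True diff_self_eq_0 diff_zero)
next
  case False
  with assms have "\<not> j \<le> i"
    by simp
  then show ?thesis
    using nik_down_eq_nik_up[of e mu j 0 "j - i" z] by (simp only: s_hat_def if_not_P if_False diff_zero)
qed

lemma borel_measurable_cauchy_tr: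
  assumes "sets M = sets borel" and "finite_measure M" and [measurable]: "f \<in> borel_measurable borel"
  shows "(\<lambda>t. cauchy_tr c M f (complex_of_real t)) \<in> borel_measurable borel"
proof -
  interpret finite_measure M by fact
  have [measurable_cong]: "sets M = sets borel" by fact
  show ?thesis
    unfolding cauchy_tr_def by measurable
qed

lemma borel_measurable_nik_up:
  assumes "\<And>k. k \<le> n \<Longrightarrow> sets (mu k) = sets borel \<and> finite_measure (mu k)"
  shows "(\<lambda>t. nik_up e mu 0 n (complex_of_real t)) \<in> borel_measurable borel"
  using assms
proof (induction n arbitrary: e mu)
  case 0
  then show ?case
    by (simp add: borel_measurable_cauchy_tr)
next
  case (Suc n)
  have "(\<lambda>t. nik_up (\<lambda>k. e (1 + k)) (\<lambda>k. mu (1 + k)) 0 n (complex_of_real t)) \<in> borel_measurable borel"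
    using Suc by simp
  then show ?case
    using Suc.prems nik_up_shift[of e mu 1 0 n] by (simp add: borel_measurable_cauchy_tr)
qed

lemma integral_path_kernel_Suc:
  assumes chain: "nikishin_chain mu K p (Suc n)" and w: "w \<notin> complex_of_real ` K (p 0)"
  defines "h \<equiv> \<lambda>t. \<integral>y. path_kernel (\<lambda>k. p (Suc k)) n (complex_of_real t) (\<lambda>k. complex_of_real (y k))
      \<partial>PiM ((\<lambda>k. p (Suc k)) ` {..n}) mu"
  shows "(\<lambda>t. inverse (w - complex_of_real t) * h t) \<in> borel_measurable (mu (p 0))"
    and "(\<integral>x. path_kernel p (Suc n) w (\<lambda>k. complex_of_real (x k)) \<partial>PiM (p ` {..Suc n}) mu)
      = (\<integral>t. inverse (w - complex_of_real t) * h t \<partial>mu (p 0))"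
proof -
  define J where "J = (\<lambda>k. p (Suc k)) ` {..n}"
  have inj: "inj_on p {..Suc n}"
    using chain by (simp add: nikishin_chain_def)
  have fresh: "p (Suc k) \<noteq> p 0" if "k \<le> n" for k
    using that by (simp add: inj_on_eq_iff[OF inj])
  have "p 0 \<notin> J"
  proof
    assume "p 0 \<in> J"
    then obtain k where "k \<le> n" and "p 0 = p (Suc k)"
      by (auto simp: J_def)
    with fresh show False
      by metis
  qed
  have insert: "p ` {..Suc n} = insert (p 0) J"
    by (simp add: J_def atMost_Suc_eq_insert_0 image_image)
  have finite: "finite_measure (mu i)" if "i \<in> insert (p 0) J" for i
    using chain that unfolding insert[symmetric]
    by (auto simp: nikishin_chain_def concentrated_on_compact_def)
  have integrable: "integrable (PiM (insert (p 0) J) mu) (\<lambda>x. path_kernel p (Suc n) w (\<lambda>k. complex_of_real (x k)))"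
    unfolding insert[symmetric] by (rule integrable_path_kernel[OF chain _ _ _ w]) (use finite insert J_def in auto)
  have update: "(\<integral>y. path_kernel p (Suc n) w (\<lambda>k. complex_of_real ((y(p 0 := t)) k)) \<partial>PiM J mu)
      = inverse (w - complex_of_real t) * h t" for t
  proof -
    have "path_kernel p (Suc n) w (\<lambda>k. complex_of_real ((y(p 0 := t)) k))
        = inverse (w - complex_of_real t) * path_kernel (\<lambda>k. p (Suc k)) n (complex_of_real t) (\<lambda>k. complex_of_real (y k))"
      for y
      unfolding path_kernel_Suc by (auto simp: fresh intro!: path_kernel_cong)
    then show ?thesis
      by (simp add: h_def J_def)
  qed
  show "(\<lambda>t. inverse (w - complex_of_real t) * h t) \<in> borel_measurable (mu (p 0))"
    unfolding update[symmetric]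
    by (rule borel_measurable_integral_PiM_update[OF _ \<open>p 0 \<notin> J\<close> finite integrable]) (simp add: J_def)
  show "(\<integral>x. path_kernel p (Suc n) w (\<lambda>k. complex_of_real (x k)) \<partial>PiM (p ` {..Suc n}) mu)
      = (\<integral>t. inverse (w - complex_of_real t) * h t \<partial>mu (p 0))"
    unfolding insert update[symmetric]
    by (rule integral_PiM_insert[OF _ \<open>p 0 \<notin> J\<close> finite integrable]) (simp add: J_def)
qed

lemma nik_up_eq_integral_path_kernel:
  assumes "nikishin_chain mu K p n" and "w \<notin> complex_of_real ` K (p 0)"
  shows "nik_up (\<lambda>k. e (p k)) (\<lambda>k. mu (p k)) 0 n w
    = (\<Prod>k\<in>p ` {..n}. complex_of_real (e k)) * (\<integral>x. path_kernel p n w (\<lambda>k. complex_of_real (x k)) \<partial>PiM (p ` {..n}) mu)"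
  using assms
proof (induction n arbitrary: p w)
  case 0
  then have finite: "finite_measure (mu (p 0))" and [measurable_cong]: "sets (mu (p 0)) = sets borel"
    by (simp_all add: nikishin_chain_def concentrated_on_compact_def)
  have "(\<lambda>t. inverse (w - complex_of_real t)) \<in> borel_measurable (mu (p 0))"
    by measurable
  from integral_PiM_singleton[where M=mu and i="p 0", OF finite this]
  have "(\<integral>x. path_kernel p 0 w (\<lambda>k. complex_of_real (x k)) \<partial>PiM {p 0} mu)
      = (\<integral>t. inverse (w - complex_of_real t) \<partial>mu (p 0))"
    by (simp add: path_kernel_def)
  then show ?case
    by (simp add: cauchy_tr_def divide_inverse)
next
  case (Suc n)
  define q where "q = (\<lambda>k. p (Suc k))"
  define h where "h t = (\<integral>y. path_kernel q n (complex_of_real t) (\<lambda>k. complex_of_real (y k)) \<partial>PiM (q ` {..n}) mu)" for t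
  define E where "E = (\<Prod>k\<in>q ` {..n}. complex_of_real (e k))"
  define nik where "nik t = nik_up (\<lambda>k. e (q k)) (\<lambda>k. mu (q k)) 0 n (complex_of_real t)" for t
  have chain: "nikishin_chain mu K q n"
    using nikishin_chain_tail[OF Suc.prems(1)] by (simp add: q_def)
  have concentrated: "concentrated_on_compact (mu (p 0)) (K (p 0))" and disjoint: "K (p 0) \<inter> K (q 0) = {}"
    using Suc.prems(1) by (auto simp: nikishin_chain_def q_def)
  note integral = integral_path_kernel_Suc[OF Suc.prems, folded q_def, unfolded h_def[symmetric]]
  have "(\<integral>t. nik t / (w - complex_of_real t) \<partial>mu (p 0)) = (\<integral>t. E * (inverse (w - complex_of_real t) * h t) \<partial>mu (p 0))"
  proof (rule integral_cong_AE)
    have [measurable_cong]: "sets (mu (p 0)) = sets borel"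
      using concentrated by (simp add: concentrated_on_compact_def)
    have [measurable]: "nik \<in> borel_measurable borel"
      unfolding nik_def using chain
      by (intro borel_measurable_nik_up) (auto simp: nikishin_chain_def concentrated_on_compact_def)
    show "(\<lambda>t. nik t / (w - complex_of_real t)) \<in> borel_measurable (mu (p 0))"
      by measurable
    show "(\<lambda>t. E * (inverse (w - complex_of_real t) * h t)) \<in> borel_measurable (mu (p 0))"
      using integral(1) by measurable
    show "AE t in mu (p 0). nik t / (w - complex_of_real t) = E * (inverse (w - complex_of_real t) * h t)"
      using concentrated unfolding concentrated_on_compact_def
    proof (elim conjE eventually_mono)
      fix t assume "t \<in> K (p 0)"
      then have "complex_of_real t \<notin> complex_of_real ` K (q 0)"
        using disjoint by auto
      then show "nik t / (w - complex_of_real t) = E * (inverse (w - complex_of_real t) * h t)"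
        using Suc.IH[OF chain] by (simp add: nik_def E_def h_def divide_inverse)
    qed
  qed
  moreover have "p 0 \<notin> q ` {..n}" and "p ` {..Suc n} = insert (p 0) (q ` {..n})"
    using Suc.prems(1) by (auto simp: nikishin_chain_def q_def inj_on_eq_iff atMost_Suc_eq_insert_0 image_image)
  ultimately show ?case
    unfolding integral(2) using nik_up_shift[of "\<lambda>k. e (p k)" "\<lambda>k. mu (p k)" 1 0 n]
    by (simp add: cauchy_tr_def nik_def E_def q_def)
qed

abbreviation ascending_kernel :: "nat \<Rightarrow> complex \<Rightarrow> (nat \<Rightarrow> real) \<Rightarrow> complex" where
  "ascending_kernel i z x \<equiv> path_kernel Suc (i - 1) z (\<lambda>k. complex_of_real (x k))"

abbreviation descending_kernel :: "nat \<Rightarrow> nat \<Rightarrow> complex \<Rightarrow> (nat \<Rightarrow> real) \<Rightarrow> complex" where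
  "descending_kernel j i z x \<equiv> path_kernel (\<lambda>k. j - k) (j - i) z (\<lambda>k. complex_of_real (x k))"

lemma s_hat_ascending_eq_integral:
  assumes "nikishin_chain mu K Suc (i - 1)" and "1 \<le> i" and "z \<notin> complex_of_real ` K 1"
  shows "s_hat e mu 1 i z
    = (\<Prod>k\<in>{1..i}. complex_of_real (e k)) * (\<integral>x. ascending_kernel i z x \<partial>PiM {1..i} mu)"
proof -
  have "Suc ` {..i - 1} = {1..i}"
    using assms(2) by (simp add: atMost_atLeast0)
  then show ?thesis
    using nik_up_eq_integral_path_kernel[OF assms(1), of z e] s_hat_ascending[OF assms(2)] assms(3) by simp
qed

lemma s_hat_descending_eq_integral:
  assumes "nikishin_chain mu K (\<lambda>k. j - k) (j - i)" and "i \<le> j" and "z \<notin> complex_of_real ` K j"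
  shows "s_hat e mu j i z
    = (\<Prod>k\<in>{i..j}. complex_of_real (e k)) * (\<integral>x. descending_kernel j i z x \<partial>PiM {i..j} mu)"
proof -
  have "(\<lambda>k. j - k) ` {..j - i} = {i..j}"
  proof
    show "{i..j} \<subseteq> (\<lambda>k. j - k) ` {..j - i}"
    proof
      fix k assume "k \<in> {i..j}"
      then show "k \<in> (\<lambda>k. j - k) ` {..j - i}"
        by (intro image_eqI[of _ _ "j - k"]) auto
    qed
  qed (use assms(2) in auto)
  then show ?thesis
    using nik_up_eq_integral_path_kernel[OF assms(1), of z e] s_hat_descending[OF assms(2)] assms(3) by simp
qed

lemma s_hat_mult_eq_integral:
  assumes chain: "nikishin_chain mu K Suc (j - 1)" and i: "1 \<le> i" "i < j"
    and z: "z \<notin> complex_of_real ` (K 1 \<union> K j)"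
  shows "s_hat e mu 1 i z * s_hat e mu j (Suc i) z = (\<Prod>k\<in>{1..j}. complex_of_real (e k))
    * (\<integral>x. ascending_kernel i z x * descending_kernel j (Suc i) z x \<partial>PiM {1..j} mu)"
proof -
  have ascending: "nikishin_chain mu K Suc (i - 1)"
    using chain i by (auto intro: nikishin_chain_prefix)
  have descending: "nikishin_chain mu K (\<lambda>k. j - k) (j - Suc i)"
    using chain i by (intro nikishin_chain_descending) auto
  have split: "{1..j} = {1..i} \<union> {Suc i..j}" and disjoint: "{1..i} \<inter> {Suc i..j} = {}"
    using i by auto
  have finite: "finite_measure (mu k)" if "k \<in> {1..j}" for k
    using chain that unfolding nikishin_chain_ascending_iff[of j, OF order.trans[OF i(1) less_imp_le[OF i(2)]]]
    by (simp add: concentrated_on_compact_def)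
  have integral: "(\<integral>x. ascending_kernel i z x * descending_kernel j (Suc i) z x \<partial>PiM {1..j} mu)
      = (\<integral>x. ascending_kernel i z x \<partial>PiM {1..i} mu) * (\<integral>x. descending_kernel j (Suc i) z x \<partial>PiM {Suc i..j} mu)"
    unfolding split
  proof (rule integral_PiM_mult[OF disjoint])
    show "integrable (PiM ({1..i} \<union> {Suc i..j}) mu) (\<lambda>x. ascending_kernel i z x * descending_kernel j (Suc i) z x)"
      unfolding split[symmetric]
      by (rule integrable_path_kernel_mult[OF ascending descending]) (use z i finite in auto)
  qed (use i finite split in \<open>auto intro!: path_kernel_cong\<close>)
  have prod: "(\<Prod>k\<in>{1..j}. complex_of_real (e k))
      = (\<Prod>k\<in>{1..i}. complex_of_real (e k)) * (\<Prod>k\<in>{Suc i..j}. complex_of_real (e k))"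
    unfolding split by (rule prod.union_disjoint) (use disjoint in auto)
  have z1: "z \<notin> complex_of_real ` K 1" and zj: "z \<notin> complex_of_real ` K j"
    using z by auto
  show ?thesis
    unfolding integral prod s_hat_ascending_eq_integral[OF ascending i(1) z1]
      s_hat_descending_eq_integral[OF descending Suc_leI[OF i(2)] zj]
    by (simp add: ac_simps)
qed

lemma s_hat_alternating_sum_eq_integrals:
  assumes chain: "nikishin_chain mu K Suc (j - 1)" and j: "1 \<le> j" and z: "z \<notin> complex_of_real ` (K 1 \<union> K j)"
  shows "s_hat e mu 1 j z
         + (\<Sum>i=1..j-1. (-1::complex) ^ (j - i) * s_hat e mu 1 i z * s_hat e mu j (i + 1) z)
         + (-1::complex) ^ j * s_hat e mu j 1 z
    = (\<Prod>k\<in>{1..j}. complex_of_real (e k))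
      * ((\<integral>x. ascending_kernel j z x \<partial>PiM {1..j} mu)
        + (\<Sum>i=1..j-1. (-1) ^ (j - i) * (\<integral>x. ascending_kernel i z x * descending_kernel j (Suc i) z x \<partial>PiM {1..j} mu))
        + (-1) ^ j * (\<integral>x. descending_kernel j 1 z x \<partial>PiM {1..j} mu))"
proof -
  define E where "E = (\<Prod>k\<in>{1..j}. complex_of_real (e k))"
  have z1: "z \<notin> complex_of_real ` K 1" and zj: "z \<notin> complex_of_real ` K j"
    using z by auto
  have descending: "nikishin_chain mu K (\<lambda>k. j - k) (j - 1)"
    using chain j by (intro nikishin_chain_descending) auto
  have "s_hat e mu j 1 z = E * (\<integral>x. descending_kernel j 1 z x \<partial>PiM {1..j} mu)"
    using s_hat_descending_eq_integral[OF descending j zj] by (simp add: E_def)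
  moreover have "s_hat e mu 1 j z = E * (\<integral>x. ascending_kernel j z x \<partial>PiM {1..j} mu)"
    using s_hat_ascending_eq_integral[OF chain j z1] by (simp add: E_def)
  moreover have "(\<Sum>i=1..j-1. (-1::complex) ^ (j - i) * s_hat e mu 1 i z * s_hat e mu j (i + 1) z)
      = E * (\<Sum>i=1..j-1. (-1) ^ (j - i) * (\<integral>x. ascending_kernel i z x * descending_kernel j (Suc i) z x \<partial>PiM {1..j} mu))"
    unfolding sum_distrib_left
  proof (rule sum.cong[OF refl])
    fix i assume "i \<in> {1..j-1}"
    then have "1 \<le> i" and "i < j"
      by auto
    then show "(-1) ^ (j - i) * s_hat e mu 1 i z * s_hat e mu j (i + 1) z
        = E * ((-1) ^ (j - i) * (\<integral>x. ascending_kernel i z x * descending_kernel j (Suc i) z x \<partial>PiM {1..j} mu))"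
      using s_hat_mult_eq_integral[OF chain _ _ z, of i e] by (simp add: E_def mult_ac)
  qed
  ultimately show ?thesis
    by (simp add: E_def algebra_simps)
qed

lemma integral_path_kernel_alternating_sum:
  assumes chain: "nikishin_chain mu K Suc (j - 1)" and j: "1 \<le> j" and z: "z \<notin> complex_of_real ` (K 1 \<union> K j)"
  shows "(\<integral>x. ascending_kernel j z x
          + (\<Sum>i=1..j-1. (-1) ^ (j - i) * ascending_kernel i z x * descending_kernel j (Suc i) z x)
          + (-1) ^ j * descending_kernel j 1 z x \<partial>PiM {1..j} mu)
    = (\<integral>x. ascending_kernel j z x \<partial>PiM {1..j} mu)
      + (\<Sum>i=1..j-1. (-1) ^ (j - i) * (\<integral>x. ascending_kernel i z x * descending_kernel j (Suc i) z x \<partial>PiM {1..j} mu))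
      + (-1) ^ j * (\<integral>x. descending_kernel j 1 z x \<partial>PiM {1..j} mu)"
proof -
  let ?S = "\<lambda>x. \<Sum>i=1..j-1. (-1) ^ (j - i) * ascending_kernel i z x * descending_kernel j (Suc i) z x"
  have z1: "z \<notin> complex_of_real ` K 1" and zj: "z \<notin> complex_of_real ` K j"
    using z by auto
  have finite: "finite_measure (mu k)" if "k \<in> {1..j}" for k
    using chain that unfolding nikishin_chain_ascending_iff[OF j] by (simp add: concentrated_on_compact_def)
  have descending: "nikishin_chain mu K (\<lambda>k. j - k) (j - 1)"
    using chain j by (intro nikishin_chain_descending) auto
  have "integrable (PiM {1..j} mu) (ascending_kernel j z)"
    by (rule integrable_path_kernel[OF chain]) (use j z1 finite in auto)
  moreover have "integrable (PiM {1..j} mu) (descending_kernel j 1 z)"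
    by (rule integrable_path_kernel[OF descending]) (use j zj finite in auto)
  moreover have terms: "integrable (PiM {1..j} mu) (\<lambda>x. (-1) ^ (j - i) * ascending_kernel i z x * descending_kernel j (Suc i) z x)"
    if i: "i \<in> {1..j-1}" for i
  proof -
    have "nikishin_chain mu K Suc (i - 1)" and "nikishin_chain mu K (\<lambda>k. j - k) (j - Suc i)"
      using chain i by (auto intro: nikishin_chain_prefix nikishin_chain_descending)
    then have "integrable (PiM {1..j} mu) (\<lambda>x. ascending_kernel i z x * descending_kernel j (Suc i) z x)"
      by (rule integrable_path_kernel_mult) (use i z1 zj finite in auto)
    then show ?thesis
      by (simp add: mult.assoc)
  qed
  moreover have "integrable (PiM {1..j} mu) ?S"
    using terms by (rule Bochner_Integration.integrable_sum)
  moreover have "integral\<^sup>L (PiM {1..j} mu) ?S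
      = (\<Sum>i=1..j-1. (-1) ^ (j - i) * (\<integral>x. ascending_kernel i z x * descending_kernel j (Suc i) z x \<partial>PiM {1..j} mu))"
    by (subst Bochner_Integration.integral_sum) (use terms in \<open>simp_all add: mult.assoc\<close>)
  ultimately show ?thesis
    by simp
qed

lemma path_kernel_alternating_sum_AE:
  assumes chain: "nikishin_chain mu K Suc (j - 1)" and j: "1 \<le> j" and z: "z \<notin> complex_of_real ` (K 1 \<union> K j)"
  shows "AE x in PiM {1..j} mu.
    ascending_kernel j z x
    + (\<Sum>i=1..j-1. (-1) ^ (j - i) * ascending_kernel i z x * descending_kernel j (Suc i) z x)
    + (-1) ^ j * descending_kernel j 1 z x = 0"
proof -
  have concentrated: "\<And>k. k \<in> {1..j} \<Longrightarrow> concentrated_on_compact (mu k) (K k)"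
    and disjoint: "\<And>k. k \<in> {1..<j} \<Longrightarrow> K k \<inter> K (Suc k) = {}"
    using chain unfolding nikishin_chain_ascending_iff[OF j] by auto
  have "AE x in PiM {1..j} mu. \<forall>k\<in>{1..j}. x k \<in> K k"
  proof (rule eventually_ball_finite[OF finite_atLeastAtMost], rule ballI)
    fix k assume "k \<in> {1..j}"
    then show "AE x in PiM {1..j} mu. x k \<in> K k"
      using concentrated by (intro AE_PiM_component_finite) (auto simp: concentrated_on_compact_def)
  qed
  then show ?thesis
  proof (rule eventually_mono)
    fix x assume x: "\<forall>k\<in>{1..j}. x k \<in> K k"
    show "ascending_kernel j z x
      + (\<Sum>i=1..j-1. (-1) ^ (j - i) * ascending_kernel i z x * descending_kernel j (Suc i) z x)
      + (-1) ^ j * descending_kernel j 1 z x = 0"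
    proof (rule path_kernel_alternating_sum[OF j])
      fix k assume "1 \<le> k" and "k < j"
      then have "x k \<in> K k" and "x (Suc k) \<in> K (Suc k)" and "K k \<inter> K (Suc k) = {}"
        using x disjoint by auto
      then show "complex_of_real (x k) \<noteq> complex_of_real (x (Suc k))"
        by auto
    next
      show "z \<noteq> complex_of_real (x 1)" and "z \<noteq> complex_of_real (x j)"
        using x z j by auto
    qed
  qed
qed

lemma s_hat_alternating_sum:
  assumes chain: "nikishin_chain mu K Suc (j - 1)" and j: "1 \<le> j" and z: "z \<notin> complex_of_real ` (K 1 \<union> K j)"
  shows "s_hat e mu 1 j z
         + (\<Sum>i=1..j-1. (-1::complex) ^ (j - i) * s_hat e mu 1 i z * s_hat e mu j (i + 1) z)
         + (-1::complex) ^ j * s_hat e mu j 1 z = 0"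
  unfolding s_hat_alternating_sum_eq_integrals[OF assms]
    integral_path_kernel_alternating_sum[OF assms, symmetric]
    integral_eq_zero_AE[OF path_kernel_alternating_sum_AE[OF assms]]
  by simp

theorem lemma6:
  fixes m :: nat and D :: "nat \<Rightarrow> real set"
    and e :: "nat \<Rightarrow> real" and mu :: "nat \<Rightarrow> real measure"
  assumes intervals: "\<And>j. 1 \<le> j \<Longrightarrow> j \<le> m \<Longrightarrow> is_interval (D j) \<and> bounded (D j)"
    and disj: "\<And>j. 1 \<le> j \<Longrightarrow> j < m \<Longrightarrow> D j \<inter> D (Suc j) = {}"
    and sign: "\<And>j. 1 \<le> j \<Longrightarrow> j \<le> m \<Longrightarrow> e j = 1 \<or> e j = -1"
    and classM: "\<And>j. 1 \<le> j \<Longrightarrow> j \<le> m \<Longrightarrow> in_class_M (mu j) (D j)"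
    and j: "2 \<le> j" "j \<le> m"
    and z: "z \<notin> complex_of_real ` (D 1 \<union> D j)"
  shows "s_hat e mu 1 j z
         + (\<Sum>i=1..j-1. (-1::complex) ^ (j - i) * s_hat e mu 1 i z * s_hat e mu j (i + 1) z)
         + (-1::complex) ^ j * s_hat e mu j 1 z = 0"
proof -
  have "1 \<le> j"
    using j by simp
  moreover have "nikishin_chain mu D Suc (j - 1)"
    unfolding nikishin_chain_ascending_iff[OF \<open>1 \<le> j\<close>]
    using classM disj j by (auto intro: in_class_M_imp_concentrated_on_compact)
  ultimately show ?thesis
    using s_hat_alternating_sum z by blast
qed

end
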